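(* Let $n\geq 1$ and let $\mathcal{F}$ be a sunflower-free collection of subsets of $\{1,2,\dots,n\}$. Then \[ |\mathcal{F}|\leq 3(n+1)\sum_{0\leq k\leq n/3}\binom{n}{k}, \] and consequently \[ \mu_{3}^{S}\leq\frac{3}{2^{2/3}}=1.889881574\dots \]
   Context: Three sets form a (3-)sunflower if the intersection of any two of them is the same set (i.e. $A\cap B=A\cap C=B\cap C$). A family $\mathcal{F}$ of sets is sunflower-free if no three distinct members of $\mathcal{F}$ form a sunflower. Let $F_3(n)$ denote the maximum size of a sunflower-free collection of subsets of $\{1,2,\dots,n\}$, and define the Erdős–Szemerédi sunflower-free capacity $\mu_3^S=\limsup_{n\to\infty}F_3(n)^{1/n}$. *)

theory Defs
  imports "HOL-Analysis.Analysis"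
begin

definition is_sunflower :: "'a set \<Rightarrow> 'a set \<Rightarrow> 'a set \<Rightarrow> bool" where
  "is_sunflower A B C \<longleftrightarrow> A \<inter> B = A \<inter> C \<and> A \<inter> C = B \<inter> C"

definition sunflower_free :: "'a set set \<Rightarrow> bool" where
  "sunflower_free \<F> \<longleftrightarrow>
     (\<forall>A\<in>\<F>. \<forall>B\<in>\<F>. \<forall>C\<in>\<F>. A \<noteq> B \<and> A \<noteq> C \<and> B \<noteq> C \<longrightarrow> \<not> is_sunflower A B C)"

definition F3 :: "nat \<Rightarrow> nat" where
  "F3 n = Max {card \<F> | \<F>. \<F> \<subseteq> Pow {1..n} \<and> sunflower_free \<F>}"

definition mu3S :: ereal where
  "mu3S = limsup (\<lambda>n. ereal (real (F3 n) powr (1 / real n)))"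

end

theory Submission
  imports Defs "HOL-Real_Asymp.Real_Asymp"
begin

text \<open>
  Tao's slice-rank argument. For sets \<open>A, B, C \<subseteq> I\<close> put
  \<open>T(A,B,C) = \<Prod>i\<in>I. (2 - 1\<^sub>A i - 1\<^sub>B i - 1\<^sub>C i)\<close>. A factor vanishes exactly when \<open>i\<close> lies in
  precisely two of the sets, so \<open>T(A,B,C) \<noteq> 0\<close> iff \<open>A, B, C\<close> form a sunflower; on a
  sunflower-free family of \<open>k\<close>-sets \<open>T\<close> is therefore diagonal. Expanding the product writes
  \<open>T\<close> as a sum of monomials supported on pairwise disjoint \<open>X, Y, Z \<subseteq> I\<close>, one of which has
  at most \<open>|I|/3\<close> elements; grouping by that small set exhibits \<open>T\<close> as a sum of at most
  \<open>3 \<Sum>\<^bsub>k \<le> n/3\<^esub> (n choose k)\<close> slices. A diagonal tensor with nonzero diagonal needs at least as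
  many slices as its support has points (Gaussian elimination, one slice at a time), which
  bounds each of the \<open>n + 1\<close> layers of the family. Finally
  \<open>\<Sum>\<^bsub>k \<le> n/3\<^esub> (n choose k) \<le> 2\<^bsup>n/3\<^esup> (1 + 1/2)\<^sup>n = (3 / 2\<^bsup>2/3\<^esup>)\<^sup>n\<close>.
\<close>

section \<open>Slice rank of diagonal tensors\<close>

text \<open>A witness that \<open>T\<close> has slice rank at most \<open>|IA| + |IB| + |IC|\<close> on \<open>S\<close>.\<close>
definition slice_decomposition ::
    "'a set \<Rightarrow> ('a \<Rightarrow> 'a \<Rightarrow> 'a \<Rightarrow> 'b::field) \<Rightarrow> 'i set \<Rightarrow> 'i set \<Rightarrow> 'i set \<Rightarrow> bool" where
  "slice_decomposition S T IA IB IC \<longleftrightarrow> (\<exists>f g u h w k. \<forall>x\<in>S. \<forall>y\<in>S. \<forall>z\<in>S.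
     T x y z = (\<Sum>i\<in>IA. f i x * g i y z) + (\<Sum>j\<in>IB. u j y * h j x z) + (\<Sum>l\<in>IC. w l z * k l x y))"

definition diagonal_on :: "'a set \<Rightarrow> ('a \<Rightarrow> 'a \<Rightarrow> 'a \<Rightarrow> 'b::zero) \<Rightarrow> bool" where
  "diagonal_on S T \<longleftrightarrow>
     (\<forall>x\<in>S. \<forall>y\<in>S. \<forall>z\<in>S. T x y z \<noteq> 0 \<longrightarrow> x = y \<and> y = z) \<and> (\<forall>x\<in>S. T x x x \<noteq> 0)"

lemma diagonal_on_subset: "diagonal_on S T \<Longrightarrow> S' \<subseteq> S \<Longrightarrow> diagonal_on S' T"
  unfolding diagonal_on_def by blast

lemma diagonal_on_swap12: "diagonal_on S T \<Longrightarrow> diagonal_on S (\<lambda>x y z. T y x z)"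
  unfolding diagonal_on_def by metis

lemma diagonal_on_swap13: "diagonal_on S T \<Longrightarrow> diagonal_on S (\<lambda>x y z. T z y x)"
  unfolding diagonal_on_def by metis

lemma slice_decomposition_swap12:
  assumes "slice_decomposition S T IA IB IC"
  shows "slice_decomposition S (\<lambda>x y z. T y x z) IB IA IC"
proof -
  obtain f g u h w k where E: "\<forall>x\<in>S. \<forall>y\<in>S. \<forall>z\<in>S.
      T x y z = (\<Sum>i\<in>IA. f i x * g i y z) + (\<Sum>j\<in>IB. u j y * h j x z) + (\<Sum>l\<in>IC. w l z * k l x y)"
    using assms unfolding slice_decomposition_def by blast
  show ?thesis
    unfolding slice_decomposition_def
    by (rule exI[of _ u], rule exI[of _ h], rule exI[of _ f], rule exI[of _ g], rule exI[of _ w],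
        rule exI[of _ "\<lambda>l x y. k l y x"]) (use E in \<open>simp add: algebra_simps\<close>)
qed

lemma slice_decomposition_swap13:
  assumes "slice_decomposition S T IA IB IC"
  shows "slice_decomposition S (\<lambda>x y z. T z y x) IC IB IA"
proof -
  obtain f g u h w k where E: "\<forall>x\<in>S. \<forall>y\<in>S. \<forall>z\<in>S.
      T x y z = (\<Sum>i\<in>IA. f i x * g i y z) + (\<Sum>j\<in>IB. u j y * h j x z) + (\<Sum>l\<in>IC. w l z * k l x y)"
    using assms unfolding slice_decomposition_def by blast
  show ?thesis
    unfolding slice_decomposition_def
    by (rule exI[of _ w], rule exI[of _ "\<lambda>l y z. k l z y"], rule exI[of _ u],
        rule exI[of _ "\<lambda>j x z. h j z x"], rule exI[of _ f], rule exI[of _ "\<lambda>i x y. g i y x"])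
      (use E in \<open>simp add: algebra_simps\<close>)
qed

text \<open>
  If the slice \<open>f i\<^sub>0 x \<cdot> g i\<^sub>0 y z\<close> is not identically zero, pick \<open>s\<close> with \<open>f i\<^sub>0 s \<noteq> 0\<close> and
  subtract \<open>f i\<^sub>0 x / f i\<^sub>0 s\<close> times the row \<open>T s y z\<close>; off \<open>s\<close> that row vanishes by diagonality,
  and the subtraction kills the \<open>i\<^sub>0\<close>-slice.
\<close>
lemma slice_decomposition_drop_first:
  assumes dec: "slice_decomposition S T IA IB IC" and i0: "i0 \<in> IA"
    and fin: "finite IA" "finite S" and diag: "diagonal_on S T"
  shows "\<exists>S'\<subseteq>S. card S \<le> Suc (card S') \<and> slice_decomposition S' T (IA - {i0}) IB IC"
proof -
  obtain f g u h w k where E: "\<forall>x\<in>S. \<forall>y\<in>S. \<forall>z\<in>S.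
      T x y z = (\<Sum>i\<in>IA. f i x * g i y z) + (\<Sum>j\<in>IB. u j y * h j x z) + (\<Sum>l\<in>IC. w l z * k l x y)"
    using dec unfolding slice_decomposition_def by blast
  have split: "(\<Sum>i\<in>IA. F i) = F i0 + (\<Sum>i\<in>IA-{i0}. F i)" for F :: "_ \<Rightarrow> 'b"
    using fin(1) i0 by (simp add: sum.remove)
  show ?thesis
  proof (cases "\<forall>x\<in>S. f i0 x = 0")
    case True
    have "slice_decomposition S T (IA - {i0}) IB IC"
      unfolding slice_decomposition_def
      by (rule exI[of _ f], rule exI[of _ g], rule exI[of _ u], rule exI[of _ h], rule exI[of _ w],
          rule exI[of _ k])
        (use E True split in simp)
    then show ?thesis by auto
  next
    case False
    then obtain s where s: "s \<in> S" "f i0 s \<noteq> 0" by blast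
    define r where "r x = f i0 x / f i0 s" for x
    have "slice_decomposition (S - {s}) T (IA - {i0}) IB IC"
      unfolding slice_decomposition_def
    proof (rule exI[of _ "\<lambda>i x. f i x - r x * f i s"], rule exI[of _ g], rule exI[of _ u],
        rule exI[of _ "\<lambda>j x z. h j x z - r x * h j s z"], rule exI[of _ w],
        rule exI[of _ "\<lambda>l x y. k l x y - r x * k l s y"], intro ballI)
      fix x y z assume xyz: "x \<in> S - {s}" "y \<in> S - {s}" "z \<in> S - {s}"
      have "T s y z = 0" using diag xyz s unfolding diagonal_on_def by blast
      then have "T x y z = T x y z - r x * T s y z" by simp
      also have "\<dots> = (\<Sum>i\<in>IA. (f i x - r x * f i s) * g i y z)
          + (\<Sum>j\<in>IB. u j y * (h j x z - r x * h j s z))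
          + (\<Sum>l\<in>IC. w l z * (k l x y - r x * k l s y))"
        using E xyz s by (simp add: algebra_simps sum_subtractf sum_distrib_left)
      also have "(\<Sum>i\<in>IA. (f i x - r x * f i s) * g i y z)
          = (\<Sum>i\<in>IA-{i0}. (f i x - r x * f i s) * g i y z)"
        using split s by (simp add: r_def)
      finally show "T x y z = (\<Sum>i\<in>IA - {i0}. (f i x - r x * f i s) * g i y z)
          + (\<Sum>j\<in>IB. u j y * (h j x z - r x * h j s z))
          + (\<Sum>l\<in>IC. w l z * (k l x y - r x * k l s y))" .
    qed
    moreover have "card S \<le> Suc (card (S - {s}))"
      using s fin by (simp add: card_Suc_Diff1)
    ultimately show ?thesis by blast
  qed
qed

lemma slice_decomposition_eliminate_first:
  assumes "finite IA" "finite S" "diagonal_on S T" "slice_decomposition S T IA IB IC"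
  shows "\<exists>S'\<subseteq>S. card S \<le> card S' + card IA \<and> slice_decomposition S' T {} IB IC"
  using assms
proof (induction IA arbitrary: S rule: finite_induct)
  case empty
  then show ?case by auto
next
  case (insert i IA)
  have "insert i IA - {i} = IA" using insert.hyps by auto
  then obtain S1 where S1: "S1 \<subseteq> S" "card S \<le> Suc (card S1)" "slice_decomposition S1 T IA IB IC"
    using slice_decomposition_drop_first[OF insert.prems(3) insertI1 _ insert.prems(1,2)] insert.hyps
    by auto
  obtain S2 where S2: "S2 \<subseteq> S1" "card S1 \<le> card S2 + card IA"
      "slice_decomposition S2 T {} IB IC"
    using insert.IH[OF _ _ S1(3)] S1(1) insert.prems(1,2)
    by (meson diagonal_on_subset finite_subset)
  have "card S \<le> card S2 + card (insert i IA)"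
    using S1(2) S2(2) insert.hyps by simp
  with S1(1) S2(1,3) show ?case by blast
qed

theorem card_le_slice_decomposition:
  fixes IA IB IC :: "'i set"
  assumes fin: "finite S" "finite IA" "finite IB" "finite IC"
    and diag: "diagonal_on S T" and dec: "slice_decomposition S T IA IB IC"
  shows "card S \<le> card IA + card IB + card IC"
proof -
  obtain S1 where S1: "S1 \<subseteq> S" "card S \<le> card S1 + card IA" "slice_decomposition S1 T {} IB IC"
    using slice_decomposition_eliminate_first[OF fin(2,1) diag dec] by blast
  have diag1: "diagonal_on S1 (\<lambda>x y z. T y x z)" "finite S1"
    using diag S1(1) fin(1) by (auto intro: diagonal_on_swap12 diagonal_on_subset finite_subset)
  obtain S2 where S2: "S2 \<subseteq> S1" "card S1 \<le> card S2 + card IB"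
      "slice_decomposition S2 (\<lambda>x y z. T y x z) {} {} IC"
    using slice_decomposition_eliminate_first[OF fin(3) diag1(2,1)
        slice_decomposition_swap12[OF S1(3)]] by blast
  have diag2: "diagonal_on S2 (\<lambda>x y z. T y z x)" "finite S2"
    using diagonal_on_swap13[OF diag1(1)] diagonal_on_subset S2(1) diag1(2)
    by (auto intro: finite_subset)
  have "slice_decomposition S2 (\<lambda>x y z. T y z x) IC {} {}"
    using slice_decomposition_swap13[OF S2(3)] by simp
  from slice_decomposition_eliminate_first[OF fin(4) diag2(2,1) this]
  obtain S3 where S3: "S3 \<subseteq> S2" "card S2 \<le> card S3 + card IC"
      "slice_decomposition S3 (\<lambda>x y z. T y z x) {} {} ({} :: 'i set)"
    by blast
  have "S3 = {}"
  proof (rule ccontr)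
    assume "S3 \<noteq> {}"
    then obtain x where "x \<in> S3" by blast
    moreover have "\<forall>x\<in>S3. T x x x = 0"
      using S3(3) by (simp add: slice_decomposition_def)
    ultimately show False
      using diag2(1) S3(1) unfolding diagonal_on_def by blast
  qed
  with S1 S2 S3 show ?thesis by simp
qed

section \<open>The sunflower tensor\<close>

lemma prod_two_minus_expand:
  fixes a b c :: "'a \<Rightarrow> 'b::comm_ring_1"
  assumes I: "finite I"
  shows "(\<Prod>i\<in>I. 2 - a i - b i - c i) =
    (\<Sum>X\<in>Pow I. \<Sum>Y\<in>Pow I. \<Sum>Z\<in>Pow I. (\<Prod>i\<in>X. - a i) * (\<Prod>i\<in>Y. - b i) * (\<Prod>i\<in>Z. - c i) *
       (if X \<inter> Y = {} \<and> X \<inter> Z = {} \<and> Y \<inter> Z = {} then 2 ^ card (I - X - Y - Z) else 0))"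
proof -
  let ?d = "\<lambda>X Y Z. if X \<inter> Y = {} \<and> X \<inter> Z = {} \<and> Y \<inter> Z = {} then 2 ^ card (I - X - Y - Z) else 0"
  have e1: "(\<Prod>i\<in>J. - c i + 2) = (\<Sum>Z\<in>Pow J. (\<Prod>i\<in>Z. - c i) * 2 ^ card (J - Z))"
    if "finite J" for J
    using prod_add[OF that, of "\<lambda>i. - c i" "\<lambda>_. 2"] by simp
  have e2: "(\<Prod>i\<in>J. - b i + (- c i + 2)) = (\<Sum>Y\<in>Pow J. (\<Prod>i\<in>Y. - b i) *
      (\<Sum>Z\<in>Pow (J - Y). (\<Prod>i\<in>Z. - c i) * 2 ^ card (J - Y - Z)))" if "finite J" for J
    using prod_add[OF that, of "\<lambda>i. - b i" "\<lambda>i. - c i + 2"] that e1 by simp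
  have "(\<Prod>i\<in>I. 2 - a i - b i - c i) = (\<Prod>i\<in>I. - a i + (- b i + (- c i + 2)))"
    by (simp add: algebra_simps)
  also have "\<dots> = (\<Sum>X\<in>Pow I. (\<Prod>i\<in>X. - a i) * (\<Sum>Y\<in>Pow (I - X). (\<Prod>i\<in>Y. - b i) *
      (\<Sum>Z\<in>Pow (I - X - Y). (\<Prod>i\<in>Z. - c i) * 2 ^ card (I - X - Y - Z))))"
    using prod_add[OF I, of "\<lambda>i. - a i" "\<lambda>i. - b i + (- c i + 2)"] e2 I by simp
  also have "\<dots> = (\<Sum>X\<in>Pow I. \<Sum>Y\<in>Pow I. \<Sum>Z\<in>Pow I.
      (\<Prod>i\<in>X. - a i) * (\<Prod>i\<in>Y. - b i) * (\<Prod>i\<in>Z. - c i) * ?d X Y Z)"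
  proof (rule sum.cong[OF refl])
    fix X assume X: "X \<in> Pow I"
    have inner: "(\<Sum>Z\<in>Pow (I - X - Y). (\<Prod>i\<in>Z. - c i) * 2 ^ card (I - X - Y - Z)) =
        (\<Sum>Z\<in>Pow I. (\<Prod>i\<in>Z. - c i) * ?d X Y Z)" if "Y \<in> Pow (I - X)" for Y
      by (rule sum.mono_neutral_cong_left) (use I that in auto)
    have "(\<Sum>Y\<in>Pow (I - X). (\<Prod>i\<in>Y. - b i) *
        (\<Sum>Z\<in>Pow (I - X - Y). (\<Prod>i\<in>Z. - c i) * 2 ^ card (I - X - Y - Z))) =
        (\<Sum>Y\<in>Pow I. (\<Prod>i\<in>Y. - b i) * (\<Sum>Z\<in>Pow I. (\<Prod>i\<in>Z. - c i) * ?d X Y Z))"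
    proof (rule sum.mono_neutral_cong_left)
      show "\<forall>Y\<in>Pow I - Pow (I - X). (\<Prod>i\<in>Y. - b i) * (\<Sum>Z\<in>Pow I. (\<Prod>i\<in>Z. - c i) * ?d X Y Z) = 0"
      proof
        fix Y assume "Y \<in> Pow I - Pow (I - X)"
        then have "X \<inter> Y \<noteq> {}" by auto
        then show "(\<Prod>i\<in>Y. - b i) * (\<Sum>Z\<in>Pow I. (\<Prod>i\<in>Z. - c i) * ?d X Y Z) = 0" by simp
      qed
    qed (use I inner in auto)
    then show "(\<Prod>i\<in>X. - a i) * (\<Sum>Y\<in>Pow (I - X). (\<Prod>i\<in>Y. - b i) *
        (\<Sum>Z\<in>Pow (I - X - Y). (\<Prod>i\<in>Z. - c i) * 2 ^ card (I - X - Y - Z))) =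
        (\<Sum>Y\<in>Pow I. \<Sum>Z\<in>Pow I. (\<Prod>i\<in>X. - a i) * (\<Prod>i\<in>Y. - b i) * (\<Prod>i\<in>Z. - c i) * ?d X Y Z)"
      by (simp add: sum_distrib_left mult_ac)
  qed
  finally show ?thesis .
qed

definition sunflower_tensor :: "'a set \<Rightarrow> 'a set \<Rightarrow> 'a set \<Rightarrow> 'a set \<Rightarrow> real" where
  "sunflower_tensor I A B C = (\<Prod>i\<in>I. 2 - indicator A i - indicator B i - indicator C i)"

lemma card_pairwise_disjoint_le:
  assumes "X \<subseteq> I" "Y \<subseteq> I" "Z \<subseteq> I" "X \<inter> Y = {}" "X \<inter> Z = {}" "Y \<inter> Z = {}" "finite I"
  shows "card X + card Y + card Z \<le> card I"
proof -
  have "finite X" "finite Y" "finite Z" using assms finite_subset by blast+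
  then have "card (X \<union> Y \<union> Z) = card X + card Y + card Z"
    using assms by (simp add: card_Un_disjoint Int_Un_distrib2)
  moreover have "card (X \<union> Y \<union> Z) \<le> card I" using assms by (intro card_mono) auto
  ultimately show ?thesis by simp
qed

text \<open>
  Every monomial \<open>(X, Y, Z)\<close> of the expansion is assigned to the first of \<open>X, Y, Z\<close> lying in
  the family \<open>L\<close> of small subsets; one always does, as the three are pairwise disjoint.
\<close>
lemma sunflower_tensor_slice_decomposition:
  assumes I: "finite I"
  defines "L \<equiv> {X\<in>Pow I. 3 * card X \<le> card I}"
  shows "slice_decomposition S (sunflower_tensor I) L L L"
proof -
  define P where "P = Pow I"
  define H where "H = P - L"
  define phi where "phi X A = (\<Prod>i\<in>X. - indicator A i :: real)" for X A :: "'a set"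
  define psi where "psi X Y Z = (if X \<inter> Y = {} \<and> X \<inter> Z = {} \<and> Y \<inter> Z = {}
      then 2 ^ card (I - X - Y - Z) else 0 :: real)" for X Y Z :: "'a set"
  have fP: "finite P" using I by (simp add: P_def)
  have LP: "L \<subseteq> P" by (auto simp: L_def P_def)
  have split: "(\<Sum>X\<in>P. G X) = (\<Sum>X\<in>L. G X) + (\<Sum>X\<in>H. G X)" for G :: "'a set \<Rightarrow> real"
    using sum.subset_diff[OF LP fP] unfolding H_def by (simp add: add.commute)
  have psi_large: "psi X Y Z = 0" if "X \<in> H" "Y \<in> H" "Z \<in> H" for X Y Z
  proof (rule ccontr)
    assume "psi X Y Z \<noteq> 0"
    then have d: "X \<inter> Y = {}" "X \<inter> Z = {}" "Y \<inter> Z = {}" unfolding psi_def by (auto split: if_splits)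
    have "card X + card Y + card Z \<le> card I"
      using card_pairwise_disjoint_le[OF _ _ _ d I] that by (auto simp: H_def P_def)
    moreover have "3 * card X > card I" "3 * card Y > card I" "3 * card Z > card I"
      using that by (auto simp: H_def P_def L_def)
    ultimately show False by linarith
  qed
  show ?thesis
    unfolding slice_decomposition_def
  proof (rule exI[of _ phi], rule exI[of _ "\<lambda>X B C. \<Sum>Y\<in>P. \<Sum>Z\<in>P. phi Y B * phi Z C * psi X Y Z"],
      rule exI[of _ phi], rule exI[of _ "\<lambda>Y A C. \<Sum>X\<in>H. \<Sum>Z\<in>P. phi X A * phi Z C * psi X Y Z"],
      rule exI[of _ phi], rule exI[of _ "\<lambda>Z A B. \<Sum>X\<in>H. \<Sum>Y\<in>H. phi X A * phi Y B * psi X Y Z"],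
      intro ballI)
    fix A B C :: "'a set"
    let ?F = "\<lambda>X Y Z. phi X A * phi Y B * phi Z C * psi X Y Z"
    have "sunflower_tensor I A B C = (\<Sum>X\<in>P. \<Sum>Y\<in>P. \<Sum>Z\<in>P. ?F X Y Z)"
      unfolding sunflower_tensor_def prod_two_minus_expand[OF I] P_def phi_def psi_def
      by (simp add: mult_ac)
    also have "\<dots> = (\<Sum>X\<in>L. \<Sum>Y\<in>P. \<Sum>Z\<in>P. ?F X Y Z) + (\<Sum>X\<in>H. \<Sum>Y\<in>L. \<Sum>Z\<in>P. ?F X Y Z)
        + (\<Sum>X\<in>H. \<Sum>Y\<in>H. \<Sum>Z\<in>P. ?F X Y Z)"
    proof -
      have "(\<Sum>X\<in>H. \<Sum>Y\<in>P. \<Sum>Z\<in>P. ?F X Y Z)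
          = (\<Sum>X\<in>H. (\<Sum>Y\<in>L. \<Sum>Z\<in>P. ?F X Y Z) + (\<Sum>Y\<in>H. \<Sum>Z\<in>P. ?F X Y Z))"
        by (rule sum.cong[OF refl], rule split)
      then show ?thesis
        using split[of "\<lambda>X. \<Sum>Y\<in>P. \<Sum>Z\<in>P. ?F X Y Z"] by (simp add: sum.distrib)
    qed
    also have "(\<Sum>X\<in>H. \<Sum>Y\<in>H. \<Sum>Z\<in>P. ?F X Y Z) = (\<Sum>X\<in>H. \<Sum>Y\<in>H. \<Sum>Z\<in>L. ?F X Y Z)"
    proof (rule sum.cong[OF refl], rule sum.cong[OF refl])
      fix X Y assume "X \<in> H" "Y \<in> H"
      then have "(\<Sum>Z\<in>H. ?F X Y Z) = 0" using psi_large by simp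
      then show "(\<Sum>Z\<in>P. ?F X Y Z) = (\<Sum>Z\<in>L. ?F X Y Z)" by (simp add: split)
    qed
    also have "\<dots> = (\<Sum>X\<in>H. \<Sum>Z\<in>L. \<Sum>Y\<in>H. ?F X Y Z)"
      by (rule sum.cong[OF refl], rule sum.swap)
    also have "\<dots> = (\<Sum>Z\<in>L. \<Sum>X\<in>H. \<Sum>Y\<in>H. ?F X Y Z)"
      by (rule sum.swap)
    also have "(\<Sum>X\<in>H. \<Sum>Y\<in>L. \<Sum>Z\<in>P. ?F X Y Z) = (\<Sum>Y\<in>L. \<Sum>X\<in>H. \<Sum>Z\<in>P. ?F X Y Z)"
      by (rule sum.swap)
    finally show "sunflower_tensor I A B C =
        (\<Sum>X\<in>L. phi X A * (\<Sum>Y\<in>P. \<Sum>Z\<in>P. phi Y B * phi Z C * psi X Y Z)) +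
        (\<Sum>Y\<in>L. phi Y B * (\<Sum>X\<in>H. \<Sum>Z\<in>P. phi X A * phi Z C * psi X Y Z)) +
        (\<Sum>Z\<in>L. phi Z C * (\<Sum>X\<in>H. \<Sum>Y\<in>H. phi X A * phi Y B * psi X Y Z))"
      by (simp add: sum_distrib_left mult_ac)
  qed
qed

lemma sunflower_tensor_nonzero_iff:
  assumes "finite I"
  shows "sunflower_tensor I A B C \<noteq> 0 \<longleftrightarrow>
    (\<forall>i\<in>I. indicator A i + indicator B i + indicator C i \<noteq> (2::real))"
  unfolding sunflower_tensor_def using assms by (auto simp: prod_zero_iff algebra_simps)

lemma sunflower_tensor_nonzero_imp_sunflower:
  assumes "finite I" "A \<subseteq> I" "B \<subseteq> I" "C \<subseteq> I" "sunflower_tensor I A B C \<noteq> 0"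
  shows "is_sunflower A B C"
proof -
  have "(x \<in> A \<and> x \<in> B \<longrightarrow> x \<in> C) \<and> (x \<in> A \<and> x \<in> C \<longrightarrow> x \<in> B) \<and> (x \<in> B \<and> x \<in> C \<longrightarrow> x \<in> A)"
    for x
  proof (cases "x \<in> I")
    case True
    then have "indicator A x + indicator B x + indicator C x \<noteq> (2::real)"
      using assms(1,5) sunflower_tensor_nonzero_iff by blast
    then show ?thesis by (auto simp: indicator_def)
  qed (use assms in auto)
  then show ?thesis unfolding is_sunflower_def by blast
qed

text \<open>
  A sunflower with two equal members has all three nested, so equal cardinalities force a
  degenerate sunflower to be trivial.
\<close>
lemma sunflower_tensor_diagonal:
  assumes FI: "F \<subseteq> Pow I" and I: "finite I" and sf: "sunflower_free F"
    and cards: "\<forall>A\<in>F. card A = k"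
  shows "diagonal_on F (sunflower_tensor I)"
  unfolding diagonal_on_def
proof (rule conjI; intro ballI impI)
  fix A B C assume ABC: "A \<in> F" "B \<in> F" "C \<in> F" and nz: "sunflower_tensor I A B C \<noteq> 0"
  have sub: "A \<subseteq> I" "B \<subseteq> I" "C \<subseteq> I" using ABC FI by auto
  have sfl: "is_sunflower A B C"
    using sunflower_tensor_nonzero_imp_sunflower[OF I sub nz] .
  have eq_if_sub: "X = Y" if "X \<subseteq> Y" "X \<in> F" "Y \<in> F" for X Y
  proof (rule card_subset_eq)
    show "finite Y" using that FI I by (meson PowD finite_subset subsetD)
  qed (use that cards in auto)
  have "A = C" if "A = B"
  proof -
    from sfl that have "A \<subseteq> C" unfolding is_sunflower_def by auto
    then show ?thesis using eq_if_sub ABC by blast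
  qed
  moreover have "A = B" if "A = C"
  proof -
    from sfl that have "A \<subseteq> B" unfolding is_sunflower_def by auto
    then show ?thesis using eq_if_sub ABC by blast
  qed
  moreover have "B = A" if "B = C"
  proof -
    from sfl that have "B \<subseteq> A" unfolding is_sunflower_def by auto
    then show ?thesis using eq_if_sub ABC by blast
  qed
  moreover have "\<not> (A \<noteq> B \<and> A \<noteq> C \<and> B \<noteq> C)"
    using sf sfl ABC unfolding sunflower_free_def by blast
  ultimately show "A = B \<and> B = C" by argo
next
  fix A assume "A \<in> F"
  show "sunflower_tensor I A A A \<noteq> 0"
    unfolding sunflower_tensor_nonzero_iff[OF I] by (auto simp: indicator_def)
qed

lemma card_small_subsets:
  "card {X\<in>Pow {1..n::nat}. 3 * card X \<le> n} = (\<Sum>k\<in>{k::nat. real k \<le> real n / 3}. n choose k)"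
proof -
  have K: "{k::nat. real k \<le> real n / 3} = {k. 3 * k \<le> n}" by auto
  have fK: "finite {k::nat. 3 * k \<le> n}" by (rule finite_subset[of _ "{..n}"]) auto
  have "{X\<in>Pow {1..n::nat}. 3 * card X \<le> n} = (\<Union>k\<in>{k. 3 * k \<le> n}. {X. X \<subseteq> {1..n} \<and> card X = k})"
    by auto
  moreover have "card (\<Union>k\<in>{k. 3 * k \<le> n}. {X. X \<subseteq> {1..n} \<and> card X = k}) =
      (\<Sum>k\<in>{k. 3 * k \<le> n}. card {X. X \<subseteq> {1..n::nat} \<and> card X = k})"
    by (rule card_UN_disjoint) (use fK in auto)
  ultimately have "card {X\<in>Pow {1..n::nat}. 3 * card X \<le> n} =
      (\<Sum>k\<in>{k. 3 * k \<le> n}. card {X. X \<subseteq> {1..n} \<and> card X = k})"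
    by simp
  also have "\<dots> = (\<Sum>k\<in>{k. 3 * k \<le> n}. n choose k)" by (simp add: n_subsets)
  finally show ?thesis using K by simp
qed

lemma sunflower_free_subset: "sunflower_free F \<Longrightarrow> G \<subseteq> F \<Longrightarrow> sunflower_free G"
  unfolding sunflower_free_def by blast

lemma card_sunflower_free_le_nat:
  assumes FI: "F \<subseteq> Pow {1..n}" and sf: "sunflower_free F"
  shows "card F \<le> (n + 1) * (3 * card {X\<in>Pow {1..n}. 3 * card X \<le> n})"
proof -
  let ?L = "{X\<in>Pow {1..n}. 3 * card X \<le> card {1..n}}"
  define layer where "layer k = {A\<in>F. card A = k}" for k
  have fF: "finite F" using FI finite_subset by (metis finite_Pow_iff finite_atLeastAtMost)
  have layer_le: "card (layer k) \<le> 3 * card ?L" for k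
  proof -
    have "card (layer k) \<le> card ?L + card ?L + card ?L"
      by (rule card_le_slice_decomposition[OF _ _ _ _ sunflower_tensor_diagonal[where k = k]
            sunflower_tensor_slice_decomposition])
        (use fF FI sf in \<open>auto simp: layer_def intro: sunflower_free_subset\<close>)
    then show ?thesis by simp
  qed
  have "card A \<le> n" if "A \<in> F" for A
    using that FI card_mono[of "{1..n}" A] by auto
  then have "F = (\<Union>k\<in>{0..n}. layer k)" by (auto simp: layer_def)
  then have "card F \<le> (\<Sum>k\<in>{0..n}. card (layer k))"
    using card_UN_le[of "{0..n}" layer] by simp
  also have "\<dots> \<le> (\<Sum>k\<in>{0..n}. 3 * card ?L)"
    by (rule sum_mono) (rule layer_le)
  finally show ?thesis by simp
qed

lemma card_sunflower_free_le:
  assumes "F \<subseteq> Pow {1..n}" "sunflower_free F"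
  shows "real (card F) \<le> 3 * (real n + 1) * (\<Sum>k\<in>{k::nat. real k \<le> real n / 3}. real (n choose k))"
proof -
  have "card F \<le> (n + 1) * (3 * (\<Sum>k\<in>{k::nat. real k \<le> real n / 3}. n choose k))"
    using card_sunflower_free_le_nat[OF assms] card_small_subsets by simp
  then have "real (card F) \<le> real ((n + 1) * (3 * (\<Sum>k\<in>{k::nat. real k \<le> real n / 3}. n choose k)))"
    by (simp only: of_nat_le_iff)
  then show ?thesis by (simp add: of_nat_sum algebra_simps)
qed

text \<open>Weight the \<open>k\<close>-th term by \<open>2\<^bsup>n/3 - k\<^esup> \<ge> 1\<close> and sum the binomial expansion.\<close>
lemma sum_small_binomials_le:
  "(\<Sum>k\<in>{k::nat. real k \<le> real n / 3}. real (n choose k)) \<le> (3 / 2 powr (2/3))^n"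
proof -
  let ?K = "{k::nat. real k \<le> real n / 3}"
  have weight: "(2::real) powr (real n / 3 - real k) = 2 powr (real n / 3) * (1/2)^k" for k
  proof -
    have "(2::real) powr (real n / 3 - real k) = 2 powr (real n / 3) / 2 powr (real k)"
      by (rule powr_diff)
    also have "(2::real) powr (real k) = 2 ^ k" by (rule powr_realpow) simp
    finally show ?thesis by (simp only: power_one_over divide_inverse mult_1 power_inverse)
  qed
  have "(\<Sum>k\<in>?K. real (n choose k)) \<le> (\<Sum>k\<in>?K. real (n choose k) * 2 powr (real n / 3 - real k))"
  proof (rule sum_mono)
    fix k assume "k \<in> ?K"
    then have "1 \<le> (2::real) powr (real n / 3 - real k)" by (intro ge_one_powr_ge_zero) auto
    then show "real (n choose k) \<le> real (n choose k) * 2 powr (real n / 3 - real k)"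
      by (simp add: mult_le_cancel_left1)
  qed
  also have "\<dots> \<le> (\<Sum>k\<in>{..n}. real (n choose k) * 2 powr (real n / 3 - real k))"
    by (rule sum_mono2) auto
  also have "\<dots> = 2 powr (real n / 3) * (\<Sum>k\<in>{..n}. real (n choose k) * (1/2)^k * 1^(n-k))"
    by (simp add: weight sum_distrib_left mult_ac)
  also have "\<dots> = 2 powr (real n / 3) * (1/2 + 1)^n"
    unfolding binomial_ring by simp
  also have "\<dots> = (3 / 2 powr (2/3))^n"
  proof -
    have "(2::real) powr (real n / 3) * 2 powr (real n * (2/3)) = 2 ^ n"
      by (simp add: powr_add[symmetric] powr_realpow[symmetric])
    moreover have "(3 / 2 powr (2/3) :: real)^n = 3^n / 2 powr (real n * (2/3))"
      by (simp add: power_divide powr_power)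
    moreover have "(2::real) powr (real n * (2/3)) > 0" by simp
    ultimately show ?thesis by (simp add: power_divide field_simps)
  qed
  finally show ?thesis .
qed

section \<open>The capacity bound\<close>

lemma F3_attained:
  obtains F where "F \<subseteq> Pow {1..n}" "sunflower_free F" "card F = F3 n"
proof -
  let ?M = "{card F | F. F \<subseteq> Pow {1..n} \<and> sunflower_free F}"
  have "finite ?M"
    by (rule finite_subset[of _ "card ` Pow (Pow {1..n})"]) auto
  moreover have "?M \<noteq> {}"
    unfolding sunflower_free_def by auto
  ultimately have "F3 n \<in> ?M"
    unfolding F3_def by (rule Max_in)
  then obtain F where F: "F3 n = card F" "F \<subseteq> Pow {1..n}" "sunflower_free F"
    by blast
  show ?thesis using that[OF F(2,3)] F(1) by simp
qed

lemma limsup_root_le: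
  fixes a p :: "nat \<Rightarrow> real"
  assumes bound: "\<And>n. 0 \<le> a n \<and> a n \<le> p n * \<beta> ^ n" and "\<beta> > 0" "\<And>n. p n \<ge> 0"
    and p_root: "(\<lambda>n. p n powr (1 / real n)) \<longlonglongrightarrow> 1"
  shows "limsup (\<lambda>n. ereal (a n powr (1 / real n))) \<le> ereal \<beta>"
proof -
  define b where "b n = p n powr (1 / real n) * \<beta>" for n
  have "eventually (\<lambda>n. ereal (a n powr (1 / real n)) \<le> ereal (b n)) sequentially"
    using eventually_ge_at_top[of "1::nat"]
  proof (rule eventually_mono)
    fix n :: nat assume n: "n \<ge> 1"
    have "a n powr (1 / real n) \<le> (p n * \<beta>^n) powr (1 / real n)"
      using bound by (intro powr_mono2) auto
    also have "\<dots> = p n powr (1 / real n) * (\<beta>^n) powr (1 / real n)"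
      using assms by (simp add: powr_mult)
    also have "(\<beta>^n) powr (1 / real n) = \<beta>"
      using assms n by (simp add: powr_realpow[symmetric] powr_powr)
    finally show "ereal (a n powr (1 / real n)) \<le> ereal (b n)" by (simp add: b_def)
  qed
  then have "limsup (\<lambda>n. ereal (a n powr (1 / real n))) \<le> limsup (\<lambda>n. ereal (b n))"
    by (rule Limsup_mono)
  also have "\<dots> = ereal \<beta>"
    using tendsto_mult_right[OF p_root, of \<beta>] by (intro lim_imp_Limsup) (auto simp: b_def)
  finally show ?thesis .
qed

lemma mu3S_le: "mu3S \<le> ereal (3 / 2 powr (2/3))"
  unfolding mu3S_def
proof (rule limsup_root_le)
  fix n
  obtain F where F: "F \<subseteq> Pow {1..n}" "sunflower_free F" "card F = F3 n"
    by (rule F3_attained)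
  have "real (F3 n) \<le> 3 * (real n + 1) * (\<Sum>k\<in>{k::nat. real k \<le> real n / 3}. real (n choose k))"
    using card_sunflower_free_le[OF F(1,2)] F(3) by simp
  also have "\<dots> \<le> 3 * (real n + 1) * (3 / 2 powr (2/3))^n"
    by (rule mult_left_mono[OF sum_small_binomials_le]) simp
  finally show "0 \<le> real (F3 n) \<and> real (F3 n) \<le> 3 * (real n + 1) * (3 / 2 powr (2/3))^n"
    by simp
qed (real_asymp | simp)+

theorem theorem1p3:
  shows "(\<forall>n::nat. \<forall>\<F>::nat set set. n \<ge> 1 \<and> \<F> \<subseteq> Pow {1..n} \<and> sunflower_free \<F> \<longrightarrow>
            real (card \<F>) \<le> 3 * (real n + 1) * (\<Sum>k\<in>{k::nat. real k \<le> real n / 3}. real (n choose k)))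
         \<and> mu3S \<le> ereal (3 / 2 powr (2/3))"
  using card_sunflower_free_le mu3S_le by auto

end
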